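(* Let $v$ be a vertex of $\mathcal T$ whose stabilizer $\Gamma_v$ in $\Gamma$ is isomorphic to $\mathbb F_{q^2}^\times$. Then $\Gamma_v$ acts transitively on the set of edges of $\mathcal T$ with origin $v$.
   Context: Let $q$ be a prime power, $F=\mathbb F_q(T)$, $A=\mathbb F_q[T]$, $\infty$ the place of $1/T$, $K=F_\infty$ with ring of integers $\mathcal O$. Let $D$ be a quaternion division algebra over $F$ with $D\otimes_FK\cong M_2(K)$, $\Lambda$ a maximal $A$-order in $D$ and $\Gamma=\Lambda^\times$, viewed as a subgroup of $\mathrm{GL}_2(K)$ via a fixed isomorphism $D\otimes_FK\cong M_2(K)$. $\mathcal T$ is the Bruhat–Tits tree of $\mathrm{PGL}_2(K)$ (vertices: homothety classes of $\mathcal O$-lattices in $K^2$, adjacency by index-$q$ inclusion; each vertex is the origin of $q+1$ edges), with the natural action of $\Gamma$. *)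

theory Defs
  imports "HOL-Analysis.Finite_Cartesian_Product"
          "HOL-Computational_Algebra.Formal_Laurent_Series"
begin

text \<open>The finite field F_q is a type 'a of class {finite, field}; q = CARD('a).
  K = F_q((1/T)) is the field of formal Laurent series 'a fls in the uniformizer
  pi = 1/T (= fls_X). Thus T is fls_X_inv, and F = F_q(T), A = F_q[T] are
  realised as subsets of K.\<close>

type_synonym 'a mat2 = "'a fls ^ 2 ^ 2"
type_synonym 'a vec2 = "'a fls ^ 2"

definition poly_to_K :: "'a::field poly \<Rightarrow> 'a fls" where
  "poly_to_K p = (\<Sum>i\<le>degree p. fls_const (coeff p i) * fls_X_inv ^ i)"

definition A_ring :: "'a::field fls set" where
  "A_ring = range poly_to_K"

definition F_field :: "'a::field fls set" where
  "F_field = {a / b | a b. a \<in> A_ring \<and> b \<in> A_ring \<and> b \<noteq> 0}"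

definition O_ring :: "'a::field fls set" where
  "O_ring = {x. x = 0 \<or> fls_subdegree x \<ge> 0}"

definition smat :: "'a::field fls \<Rightarrow> 'a mat2 \<Rightarrow> 'a mat2" where
  "smat c M = mat c ** M"

definition span_over :: "'a::field fls set \<Rightarrow> 'a mat2 set \<Rightarrow> 'a mat2 set" where
  "span_over S B = {M. \<exists>c. M = (\<Sum>b\<in>B. smat (c b) b) \<and> (\<forall>b\<in>B. c b \<in> S)}"

definition indep_over :: "'a::field fls set \<Rightarrow> 'a mat2 set \<Rightarrow> bool" where
  "indep_over S B \<longleftrightarrow> (\<forall>c. (\<forall>b\<in>B. c b \<in> S) \<and> (\<Sum>b\<in>B. smat (c b) b) = 0
       \<longrightarrow> (\<forall>b\<in>B. c b = 0))"

text \<open>D is a quaternion division algebra over F, given as an F-subalgebra of M_2(K)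
  such that the inclusion induces D \<otimes>_F K \<cong> M_2(K): D has an F-basis of 4 elements
  which is a K-basis of M_2(K) (K-linear independence + dimension 4); then the center
  of D is F automatically.\<close>
definition quaternion_division_algebra :: "'a::{finite,field} mat2 set \<Rightarrow> bool" where
  "quaternion_division_algebra D \<longleftrightarrow>
     (\<exists>B. finite B \<and> card B = 4 \<and> D = span_over F_field B \<and> indep_over UNIV B) \<and>
     mat 1 \<in> D \<and> (\<forall>x\<in>D. \<forall>y\<in>D. x ** y \<in> D) \<and>
     (\<forall>x\<in>D. x \<noteq> 0 \<longrightarrow> (\<exists>y\<in>D. x ** y = mat 1 \<and> y ** x = mat 1))"

definition A_order :: "'a::{finite,field} mat2 set \<Rightarrow> 'a mat2 set \<Rightarrow> bool" where
  "A_order D \<Lambda> \<longleftrightarrow> \<Lambda> \<subseteq> D \<and> mat 1 \<in> \<Lambda> \<and> (\<forall>x\<in>\<Lambda>. \<forall>y\<in>\<Lambda>. x ** y \<in> \<Lambda>) \<and>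
     (\<exists>G. finite G \<and> \<Lambda> = span_over A_ring G) \<and>
     (\<forall>d\<in>D. \<exists>a\<in>F_field. \<exists>x\<in>\<Lambda>. d = smat a x)"

definition maximal_A_order :: "'a::{finite,field} mat2 set \<Rightarrow> 'a mat2 set \<Rightarrow> bool" where
  "maximal_A_order D \<Lambda> \<longleftrightarrow> A_order D \<Lambda> \<and> (\<forall>\<Lambda>'. A_order D \<Lambda>' \<and> \<Lambda> \<subseteq> \<Lambda>' \<longrightarrow> \<Lambda>' = \<Lambda>)"

definition units_of_order :: "'a::{finite,field} mat2 set \<Rightarrow> 'a mat2 set" where
  "units_of_order \<Lambda> = {g\<in>\<Lambda>. \<exists>h\<in>\<Lambda>. g ** h = mat 1 \<and> h ** g = mat 1}"

definition O_lattice :: "'a::field vec2 set \<Rightarrow> bool" where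
  "O_lattice L \<longleftrightarrow> (\<exists>g::'a mat2. invertible g \<and> L = {g *v x | x. \<forall>i. x $ i \<in> O_ring})"

definition scale_set :: "'a::field fls \<Rightarrow> 'a vec2 set \<Rightarrow> 'a vec2 set" where
  "scale_set c L = (\<lambda>x. c *s x) ` L"

definition homothety_class :: "'a::field vec2 set \<Rightarrow> 'a vec2 set set" where
  "homothety_class L = {scale_set c L | c. c \<noteq> 0}"

definition BT_vertex :: "'a::field vec2 set set \<Rightarrow> bool" where
  "BT_vertex V \<longleftrightarrow> (\<exists>L. O_lattice L \<and> V = homothety_class L)"

definition lattice_index :: "'a::field vec2 set \<Rightarrow> 'a vec2 set \<Rightarrow> nat" where
  "lattice_index L L' = card ((\<lambda>x. (\<lambda>y. x + y) ` L') ` L)"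

text \<open>Edges: ordered pairs (V, W) of vertices with representatives L' \<subseteq> L of index q.
  The origin of (V, W) is V.\<close>
definition BT_edge :: "'a::{finite,field} vec2 set set \<Rightarrow> 'a vec2 set set \<Rightarrow> bool" where
  "BT_edge V W \<longleftrightarrow> BT_vertex V \<and> BT_vertex W \<and>
     (\<exists>L\<in>V. \<exists>L'\<in>W. L' \<subseteq> L \<and> lattice_index L L' = CARD('a))"

definition act_vertex :: "'a::field mat2 \<Rightarrow> 'a vec2 set set \<Rightarrow> 'a vec2 set set" where
  "act_vertex g V = (\<lambda>L. (\<lambda>x. g *v x) ` L) ` V"

definition stabilizer :: "'a::field mat2 set \<Rightarrow> 'a vec2 set set \<Rightarrow> 'a mat2 set" where
  "stabilizer \<Gamma> V = {g\<in>\<Gamma>. act_vertex g V = V}"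

end

theory Submission
  imports Defs
    "HOL-Analysis.Determinants"
    "HOL-Algebra.Multiplicative_Group"
    "HOL-Number_Theory.Residues"
begin

text \<open>Let \<open>g\<close> generate the cyclic group \<open>\<Gamma>\<^sub>v\<close> of order \<open>q\<^sup>2 - 1\<close> and write \<open>v = [h O\<^sup>2]\<close>.
  Since \<open>g\<close> fixes \<open>v\<close>, the conjugate \<open>g' = h\<^sup>-\<^sup>1 g h\<close> maps \<open>O\<^sup>2\<close> onto \<open>c O\<^sup>2\<close> for a scalar \<open>c\<close>;
  as \<open>g'\<close> has finite order, \<open>c\<close> is a unit and \<open>g'\<close> is integral. The edges at \<open>v\<close> correspond to
  the sublattices of index \<open>q\<close> of \<open>O\<^sup>2\<close>, i.e. to the preimages of the lines of \<open>\<bbbF>\<^sub>q\<^sup>2\<close> under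
  reduction. The reduction \<open>G\<close> of \<open>g'\<close> still has order \<open>q\<^sup>2 - 1\<close>, since an integral matrix of
  order prime to \<open>p\<close> reducing to \<open>1\<close> is \<open>1\<close>. The powers of \<open>G\<close> are \<open>q\<^sup>2 - 1\<close> distinct nonzero
  elements of \<open>\<bbbF>\<^sub>q[G] = \<bbbF>\<^sub>q G + \<bbbF>\<^sub>q\<close>, which is therefore a field with \<open>q\<^sup>2\<close> elements
  acting simply transitively on \<open>\<bbbF>\<^sub>q\<^sup>2 - {0}\<close>. Hence the powers of \<open>G\<close> permute the lines
  transitively, and the powers of \<open>g\<close> permute the edges at \<open>v\<close> transitively.\<close>

no_notation fps_nth (infixl \<open>$\<close> 75)

section \<open>The valuation ring\<close>

lemma O_ring_iff: "x \<in> O_ring \<longleftrightarrow> (\<forall>n<0. fls_nth x n = 0)"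
  unfolding O_ring_def by (auto intro: fls_subdegree_ge0I)

lemma O_ring_subdegree: "x \<in> O_ring \<Longrightarrow> 0 \<le> fls_subdegree x"
  by (auto simp: O_ring_iff intro: fls_subdegree_ge0I)

lemma O_ring_0 [simp]: "0 \<in> O_ring"
  and O_ring_1 [simp]: "1 \<in> O_ring"
  and O_ring_const [simp]: "fls_const c \<in> O_ring"
  by (auto simp: O_ring_iff)

lemma O_ring_add [simp]: "x \<in> O_ring \<Longrightarrow> y \<in> O_ring \<Longrightarrow> x + y \<in> O_ring"
  and O_ring_diff [simp]: "x \<in> O_ring \<Longrightarrow> y \<in> O_ring \<Longrightarrow> x - y \<in> O_ring"
  and O_ring_uminus [simp]: "x \<in> O_ring \<Longrightarrow> - x \<in> O_ring"
  by (auto simp: O_ring_iff)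

lemma O_ring_mult [simp]:
  fixes x y :: "'a::field fls"
  shows "x \<in> O_ring \<Longrightarrow> y \<in> O_ring \<Longrightarrow> x * y \<in> O_ring"
  by (cases "x = 0 \<or> y = 0") (auto simp: O_ring_def)

lemma O_ring_sum [simp]: "(\<And>i. i \<in> A \<Longrightarrow> f i \<in> O_ring) \<Longrightarrow> sum f A \<in> O_ring"
  by (induction A rule: infinite_finite_induct) auto

lemma O_ring_inverse:
  fixes x :: "'a::field fls"
  assumes "x \<in> O_ring" "fls_nth x 0 \<noteq> 0"
  shows "inverse x \<in> O_ring"
proof -
  have "fls_subdegree x = 0"
    using fls_subdegree_leI[OF assms(2)] O_ring_subdegree[OF assms(1)] by simp
  then show ?thesis by (simp add: O_ring_def)
qed

lemma fls_nth_zero_mult: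
  fixes x y :: "'a::field fls"
  assumes "x \<in> O_ring" "y \<in> O_ring"
  shows "fls_nth (x * y) 0 = fls_nth x 0 * fls_nth y 0"
proof -
  obtain f g where "x = fps_to_fls f" "y = fps_to_fls g"
    using assms O_ring_subdegree fls_regpart_to_fls_trivial by metis
  then show ?thesis by (simp add: fls_times_fps_to_fls[symmetric])
qed

section \<open>Powers and adjugates of matrices\<close>

lemma matrix_diff_rdistrib:
  fixes A B C :: "'b::ring_1^'n^'n"
  shows "(A - B) ** C = A ** C - B ** C"
  by (simp add: matrix_matrix_mult_def vec_eq_iff sum_subtractf left_diff_distrib)

lemma matrix_sum_ldistrib:
  fixes A :: "'b::semiring_1^'n^'n"
  shows "A ** sum f I = sum (\<lambda>i. A ** f i) I"
  by (induction I rule: infinite_finite_induct) (simp_all add: matrix_add_ldistrib)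

lemma mat_mult_entry: "(mat c ** A) $ i $ j = c * A$i$j"
  by (simp add: matrix_matrix_mult_def mat_def if_distrib if_distribR cong: if_cong)

lemma mult_mat_commute:
  fixes M :: "'b::comm_semiring_1^'n^'n"
  shows "M ** mat c = mat c ** M"
  by (simp add: vec_eq_iff matrix_matrix_mult_def mat_def if_distrib if_distribR mult.commute
      cong: if_cong)

lemma matrix_vector_mult_smult: "(M::'b::comm_semiring_1^'n^'m) *v (t *s x) = t *s (M *v x)"
  by (simp add: vec_eq_iff matrix_vector_mult_def sum_distrib_left algebra_simps)

lemma scalar_mat_mult_vector: "(mat c ** A) *v y = c *s (A *v y)"
  by (simp add: vec_eq_iff matrix_vector_mult_def mat_mult_entry sum_distrib_left mult.assoc)

lemma sum_mat_const: "sum (\<lambda>_. mat c) I = (mat (of_nat (card I) * c) :: 'b::semiring_1^'n^'n)"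
  by (induction I rule: infinite_finite_induct) (simp_all add: mat_def vec_eq_iff distrib_right)

definition matpow :: "'b::semiring_1^'n^'n \<Rightarrow> nat \<Rightarrow> 'b^'n^'n" where
  "matpow A n = ((**) A ^^ n) (mat 1)"

lemma matpow_0 [simp]: "matpow A 0 = mat 1"
  by (simp add: matpow_def)

lemma matpow_Suc: "matpow A (Suc n) = A ** matpow A n"
  by (simp add: matpow_def)

lemma matpow_add: "matpow A (m + n) = matpow A m ** matpow A n"
  by (induction m) (simp_all add: matpow_Suc matrix_mul_assoc)

lemma matpow_1 [simp]: "matpow A 1 = A"
  by (simp add: matpow_Suc)

lemma matpow_Suc': "matpow A (Suc n) = matpow A n ** A"
  by (metis matpow_add matpow_1 Suc_eq_plus1)

lemma matpow_mult: "matpow A (m * n) = matpow (matpow A m) n"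
  by (induction n) (simp_all add: matpow_Suc matpow_add)

lemma matpow_mat_1 [simp]: "matpow (mat 1) n = mat 1"
  by (induction n) (simp_all add: matpow_Suc)

lemma matpow_conj:
  assumes "h ** hi = mat 1" "hi ** h = mat 1"
  shows "matpow (hi ** g ** h) n = hi ** matpow g n ** h"
proof (induction n)
  case 0
  show ?case using assms(2) by simp
next
  case (Suc n)
  have "matpow (hi ** g ** h) (Suc n) = hi ** g ** (h ** hi) ** matpow g n ** h"
    using Suc by (simp add: matpow_Suc matrix_mul_assoc)
  also have "\<dots> = hi ** matpow g (Suc n) ** h"
    using assms(1) by (simp add: matrix_mul_assoc matpow_Suc)
  finally show ?case .
qed

lemma matpow_inverse:
  assumes "matpow A N = mat 1" "k \<le> N"
  shows "matpow A k ** matpow A (N - k) = mat 1" "matpow A (N - k) ** matpow A k = mat 1"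
  using assms by (metis matpow_add le_add_diff_inverse add.commute)+

lemma telescope_matpow:
  fixes B :: "'b::ring_1^'n^'n"
  shows "(B - mat 1) ** sum (matpow B) {..<n} = matpow B n - mat 1"
proof -
  have "(B - mat 1) ** sum (matpow B) {..<n} = sum (\<lambda>j. matpow B (Suc j) - matpow B j) {..<n}"
    by (simp add: matrix_sum_ldistrib matrix_diff_rdistrib matpow_Suc)
  also have "\<dots> = matpow B n - mat 1"
    by (simp add: sum_lessThan_telescope)
  finally show ?thesis .
qed

definition has_mat_order :: "'b::semiring_1^'n^'n \<Rightarrow> nat \<Rightarrow> bool" where
  "has_mat_order A N \<longleftrightarrow> (\<forall>n. matpow A n = mat 1 \<longleftrightarrow> N dvd n)"

lemma has_mat_order_matpow_eq_1: "has_mat_order A N \<Longrightarrow> matpow A N = mat 1"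
  by (simp add: has_mat_order_def)

lemma has_mat_order_inj_on:
  assumes "has_mat_order A N"
  shows "inj_on (matpow A) {..<N}"
proof -
  have *: "a = b" if "a < b" "b < N" "matpow A a = matpow A b" for a b
  proof -
    have "matpow A (b - a) = matpow A (b - a) ** (matpow A a ** matpow A (N - a))"
      using matpow_inverse(1)[OF has_mat_order_matpow_eq_1[OF assms], of a] that by simp
    also have "\<dots> = matpow A b ** matpow A (N - a)"
      using that by (metis matpow_add matrix_mul_assoc le_add_diff_inverse2 less_imp_le)
    also have "\<dots> = mat 1"
      using matpow_inverse(1)[OF has_mat_order_matpow_eq_1[OF assms], of a] that by simp
    finally have "N dvd b - a" using assms by (simp add: has_mat_order_def)
    then show ?thesis using that by (simp add: nat_dvd_not_less)
  qed
  show ?thesis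
  proof (rule inj_onI)
    fix a b assume "a \<in> {..<N}" "b \<in> {..<N}" "matpow A a = matpow A b"
    then show "a = b" using *[of a b] *[of b a] by (cases a b rule: linorder_cases) auto
  qed
qed

lemma has_mat_order_conj:
  assumes "h ** hi = mat 1" "hi ** h = mat 1"
  shows "has_mat_order (hi ** g ** h) N \<longleftrightarrow> has_mat_order g N"
proof -
  have "matpow (hi ** g ** h) n = mat 1 \<longleftrightarrow> matpow g n = mat 1" for n
  proof
    assume "matpow (hi ** g ** h) n = mat 1"
    then have "hi ** matpow g n ** h = mat 1"
      using assms by (simp add: matpow_conj)
    have "matpow g n = (h ** hi) ** matpow g n ** (h ** hi)"
      using assms by simp
    also have "\<dots> = h ** (hi ** matpow g n ** h) ** hi"
      by (simp add: matrix_mul_assoc)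
    finally show "matpow g n = mat 1"
      using assms \<open>hi ** matpow g n ** h = mat 1\<close> by simp
  next
    assume "matpow g n = mat 1"
    then show "matpow (hi ** g ** h) n = mat 1"
      using assms by (simp add: matpow_conj)
  qed
  then show ?thesis by (simp add: has_mat_order_def)
qed

text \<open>Unlike \<open>matrix_inv\<close>, the inverse \<open>det M\<^sup>-\<^sup>1 adj2 M\<close> visibly has integral entries when
  \<open>M\<close> does and \<open>det M\<close> is a unit.\<close>

definition adj2 :: "'b::comm_ring_1^2^2 \<Rightarrow> 'b^2^2" where
  "adj2 M = (\<chi> i j. if i = 1 \<and> j = 1 then M$2$2 else if i = 1 \<and> j = 2 then - M$1$2
      else if i = 2 \<and> j = 1 then - M$2$1 else M$1$1)"

lemma mult_adj2: "M ** adj2 M = mat (det M)"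
  by (simp add: vec_eq_iff forall_2 matrix_matrix_mult_def sum_2 mat_def adj2_def det_2
      algebra_simps)

lemma right_inverse_adj2:
  fixes M :: "'b::field^2^2"
  assumes "det M \<noteq> 0"
  shows "M ** (mat (inverse (det M)) ** adj2 M) = mat 1"
proof -
  have "M ** (mat (inverse (det M)) ** adj2 M) = mat (inverse (det M)) ** (M ** adj2 M)"
    by (metis mult_mat_commute matrix_mul_assoc)
  also have "\<dots> = mat 1"
    using assms by (simp add: mult_adj2 vec_eq_iff mat_mult_entry) (simp add: mat_def)
  finally show ?thesis .
qed

section \<open>Integral matrices and reduction\<close>

definition std_lattice :: "'a::field vec2 set" where
  "std_lattice = {x. \<forall>i. x$i \<in> O_ring}"

definition integral_mat :: "'a::field mat2 \<Rightarrow> bool" where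
  "integral_mat M \<longleftrightarrow> (\<forall>i j. M$i$j \<in> O_ring)"

text \<open>Reduction modulo the maximal ideal of \<open>O\<close>: the coefficient of \<open>(1/T)\<^sup>0\<close>.\<close>

definition red_mat :: "'a::field mat2 \<Rightarrow> 'a^2^2" where
  "red_mat M = (\<chi> i j. fls_nth (M$i$j) 0)"

definition red_vec :: "'a::field vec2 \<Rightarrow> 'a^2" where
  "red_vec x = (\<chi> i. fls_nth (x$i) 0)"

lemma std_lattice_0 [simp]: "0 \<in> std_lattice"
  and std_lattice_add [simp]: "x \<in> std_lattice \<Longrightarrow> y \<in> std_lattice \<Longrightarrow> x + y \<in> std_lattice"
  and std_lattice_diff [simp]: "x \<in> std_lattice \<Longrightarrow> y \<in> std_lattice \<Longrightarrow> x - y \<in> std_lattice"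
  by (auto simp: std_lattice_def)

lemma red_vec_add [simp]: "red_vec (x + y) = red_vec x + red_vec y"
  and red_vec_diff [simp]: "red_vec (x - y) = red_vec x - red_vec y"
  and red_vec_0 [simp]: "red_vec 0 = 0"
  by (simp_all add: red_vec_def vec_eq_iff)

lemma integral_mat_mult: "integral_mat A \<Longrightarrow> integral_mat B \<Longrightarrow> integral_mat (A ** B)"
  by (simp add: integral_mat_def matrix_matrix_mult_def)

lemma integral_mat_1 [simp]: "integral_mat (mat 1)"
  by (simp add: integral_mat_def mat_def)

lemma integral_matpow: "integral_mat A \<Longrightarrow> integral_mat (matpow A n)"
  by (induction n) (simp_all add: matpow_Suc integral_mat_mult)

lemma integral_mat_sum: "(\<And>i. i \<in> I \<Longrightarrow> integral_mat (f i)) \<Longrightarrow> integral_mat (sum f I)"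
  by (induction I rule: infinite_finite_induct) (auto simp: integral_mat_def)

lemma integral_mat_det: "integral_mat M \<Longrightarrow> det M \<in> O_ring"
  by (simp add: integral_mat_def det_2)

lemma integral_mat_iff_maps_std_lattice:
  "integral_mat A \<longleftrightarrow> (\<forall>y\<in>std_lattice. A *v y \<in> std_lattice)"
proof
  assume "integral_mat A"
  then show "\<forall>y\<in>std_lattice. A *v y \<in> std_lattice"
    by (simp add: integral_mat_def std_lattice_def matrix_vector_mult_def)
next
  assume A: "\<forall>y\<in>std_lattice. A *v y \<in> std_lattice"
  have "A$i$j \<in> O_ring" for i j
  proof -
    have "(\<chi> k. if k = j then 1 else 0) \<in> (std_lattice :: 'a vec2 set)"
      by (simp add: std_lattice_def)
    then have "(A *v (\<chi> k. if k = j then 1 else 0)) $ i \<in> O_ring"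
      using A by (simp add: std_lattice_def)
    then show ?thesis
      by (simp add: matrix_vector_mult_def if_distrib if_distribR cong: if_cong)
  qed
  then show "integral_mat A" by (simp add: integral_mat_def)
qed

lemma red_mat_mult: "integral_mat A \<Longrightarrow> integral_mat B \<Longrightarrow> red_mat (A ** B) = red_mat A ** red_mat B"
  by (simp add: integral_mat_def red_mat_def matrix_matrix_mult_def vec_eq_iff fls_nth_sum
      fls_nth_zero_mult)

lemma red_mat_1 [simp]: "red_mat (mat 1) = mat 1"
  by (simp add: red_mat_def mat_def vec_eq_iff)

lemma red_matpow: "integral_mat A \<Longrightarrow> red_mat (matpow A n) = matpow (red_mat A) n"
  by (induction n) (simp_all add: matpow_Suc red_mat_mult integral_matpow)

lemma red_mat_sum: "red_mat (sum f I) = sum (\<lambda>i. red_mat (f i)) I"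
  by (induction I rule: infinite_finite_induct) (simp_all add: red_mat_def vec_eq_iff)

lemma red_mat_det: "integral_mat M \<Longrightarrow> fls_nth (det M) 0 = det (red_mat M)"
  by (simp add: integral_mat_def det_2 red_mat_def fls_nth_zero_mult)

lemma red_vec_mult:
  "integral_mat A \<Longrightarrow> y \<in> std_lattice \<Longrightarrow> red_vec (A *v y) = red_mat A *v red_vec y"
  by (simp add: integral_mat_def std_lattice_def red_vec_def red_mat_def matrix_vector_mult_def
      vec_eq_iff fls_nth_sum fls_nth_zero_mult)

text \<open>An integral matrix of order prime to the residue characteristic that reduces to the identity
  is the identity: with \<open>S = 1 + B + \<dots> + B\<^sup>N\<^sup>-\<^sup>1\<close> we have \<open>(B - 1) S = B\<^sup>N - 1 = 0\<close>, while \<open>S\<close>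
  reduces to the invertible scalar \<open>N\<close>.\<close>

lemma integral_mat_eq_1_if_red_mat_eq_1:
  fixes B :: "'a::field mat2"
  assumes "integral_mat B" "matpow B N = mat 1" "(of_nat N :: 'a) \<noteq> 0" "red_mat B = mat 1"
  shows "B = mat 1"
proof -
  define S where "S = sum (matpow B) {..<N}"
  have "integral_mat S"
    unfolding S_def by (intro integral_mat_sum integral_matpow assms(1))
  then have "fls_nth (det S) 0 = det (red_mat S)"
    by (rule red_mat_det)
  also have "red_mat S = mat (of_nat N)"
    using assms(4) by (simp add: S_def red_mat_sum red_matpow[OF assms(1)] sum_mat_const del: sum_constant)
  finally have "fls_nth (det S) 0 = of_nat N * of_nat N"
    by (simp add: det_2 mat_def)
  then have "det S \<noteq> 0"
    using assms(3) by auto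
  then obtain S' where S': "S ** S' = mat 1"
    using invertible_det_nz invertible_right_inverse by blast
  have "(B - mat 1) ** S = 0"
    unfolding S_def telescope_matpow using assms(2) by simp
  then have "(B - mat 1) ** S ** S' = 0"
    by simp
  then have "B - mat 1 = 0"
    by (simp add: S' matrix_mul_assoc[symmetric])
  then show ?thesis by simp
qed

section \<open>Matrices of order \<open>q\<^sup>2 - 1\<close> over a finite field\<close>

lemma two_le_card_field: "2 \<le> CARD('b::{finite,field})"
proof -
  have "card {0::'b, 1} \<le> CARD('b)" by (rule card_mono) auto
  then show ?thesis by simp
qed

text \<open>This is \<open>ring_of_type_algebra\<close> from \<open>HOL-Algebra.Algebraic_Closure_Type\<close>; importing that theory
  would bring a second constant \<open>mult_of\<close> (from \<open>Ring_Divisibility\<close>) clashing with the one used by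
  \<open>finite_field_mult_group_has_gen\<close>.\<close>

definition type_ring :: "'b::field ring" where
  "type_ring = \<lparr>carrier = UNIV, monoid.mult = (*), one = 1, ring.zero = 0, add = (+)\<rparr>"

lemma field_type_ring: "field (type_ring :: 'b::field ring)"
proof -
  have "\<exists>y. x + y = 0" for x :: 'b
    using add.right_inverse by blast
  moreover have "x \<noteq> 0 \<Longrightarrow> \<exists>y. x * y = 1" for x :: 'b
    by (rule exI[of _ "inverse x"]) auto
  ultimately show ?thesis
    unfolding type_ring_def by unfold_locales (auto simp: algebra_simps Units_def)
qed

lemma finite_field_element_of_order:
  "\<exists>a::'b::{finite,field}. \<forall>n. a ^ n = 1 \<longleftrightarrow> (CARD('b) - 1) dvd n"
proof -
  let ?R = "type_ring :: 'b ring"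
  interpret field ?R by (rule field_type_ring)
  interpret U: group "mult_of ?R" by (rule field_mult_group)
  have pow: "x [^]\<^bsub>mult_of ?R\<^esub> n = x ^ n" for x :: 'b and n :: nat
    by (induction n) (simp_all add: nat_pow_mult_of type_ring_def)
  have carrier: "carrier (mult_of ?R) = UNIV - {0}"
    by (simp add: type_ring_def)
  have "finite (carrier ?R)"
    by (simp add: type_ring_def)
  then obtain a where a: "a \<in> carrier (mult_of ?R)"
    and gen: "carrier (mult_of ?R) = {a [^]\<^bsub>?R\<^esub> i | i::nat. i \<in> UNIV}"
    using finite_field_mult_group_has_gen by blast
  have fin: "finite (carrier (mult_of ?R))"
    by (simp add: carrier)
  have "U.ord a = card (generate (mult_of ?R) {a})"
    by (rule U.generate_pow_card[OF a])
  also have "generate (mult_of ?R) {a} = carrier (mult_of ?R)"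
    using U.generate_pow_nat[OF a] U.ord_ge_1[OF fin a] gen by (simp add: nat_pow_mult_of)
  also have "card (carrier (mult_of ?R)) = CARD('b) - 1"
    by (simp add: type_ring_def card_Diff_singleton)
  finally have ord: "U.ord a = CARD('b) - 1" .
  have "a ^ n = 1 \<longleftrightarrow> (CARD('b) - 1) dvd n" for n
    using U.pow_eq_id[OF a, of n] unfolding ord pow by (simp add: type_ring_def)
  then show ?thesis by blast
qed

text \<open>By Cayley--Hamilton, \<open>alg_of G\<close> is the subalgebra \<open>F[G]\<close> generated by \<open>G\<close>.\<close>

definition alg_of :: "'b::field^2^2 \<Rightarrow> ('b^2^2) set" where
  "alg_of G = (\<lambda>(a, b). mat a ** G + mat b) ` UNIV"

lemma alg_ofI: "mat a ** G + mat b \<in> alg_of G"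
  unfolding alg_of_def by auto

lemma alg_ofE: "M \<in> alg_of G \<Longrightarrow> (\<And>a b. M = mat a ** G + mat b \<Longrightarrow> P) \<Longrightarrow> P"
  unfolding alg_of_def by auto

lemma alg_of_0: "0 \<in> alg_of G"
  using alg_ofI[of 0 G 0] by simp

lemma alg_of_1: "mat 1 \<in> alg_of G"
  using alg_ofI[of 0 G 1] by simp

lemma alg_of_diff: "M \<in> alg_of G \<Longrightarrow> M' \<in> alg_of G \<Longrightarrow> M - M' \<in> alg_of G"
proof (elim alg_ofE)
  fix a b c d assume "M = mat a ** G + mat b" "M' = mat c ** G + mat d"
  moreover have "(mat a ** G + mat b) - (mat c ** G + mat d) = mat (a - c) ** G + mat (b - d)"
    by (simp add: vec_eq_iff mat_mult_entry) (simp add: mat_def algebra_simps)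
  ultimately show "M - M' \<in> alg_of G" using alg_ofI by metis
qed

lemma alg_of_mult: "M \<in> alg_of G \<Longrightarrow> G ** M \<in> alg_of G"
proof (elim alg_ofE)
  fix a b assume "M = mat a ** G + mat b"
  moreover have "G ** (mat a ** G + mat b) =
     mat (a * (G$1$1 + G$2$2) + b) ** G + mat (- (a * det G))"
    by (simp add: vec_eq_iff forall_2 matrix_matrix_mult_def sum_2 mat_def det_2 algebra_simps)
  ultimately show "G ** M \<in> alg_of G" using alg_ofI by metis
qed

lemma matpow_in_alg_of: "matpow G k \<in> alg_of G"
  by (induction k) (simp_all add: matpow_Suc alg_of_1 alg_of_mult)

lemma finite_alg_of: "finite (alg_of (G::'b::{finite,field}^2^2))"
  unfolding alg_of_def by simp

lemma card_alg_of_le: "card (alg_of (G::'b::{finite,field}^2^2)) \<le> CARD('b) * CARD('b)"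
proof -
  have "card (alg_of G) \<le> card (UNIV :: ('b \<times> 'b) set)"
    unfolding alg_of_def by (rule card_image_le) simp
  then show ?thesis by (metis UNIV_Times_UNIV card_cartesian_product)
qed

lemma powers_eq_nonzero_alg_of:
  fixes G :: "'b::{finite,field}^2^2"
  assumes ord: "has_mat_order G (CARD('b) * CARD('b) - 1)"
  shows "matpow G ` {..<CARD('b) * CARD('b) - 1} = alg_of G - {0}"
proof (rule card_subset_eq)
  let ?N = "CARD('b) * CARD('b) - 1"
  have "matpow G k \<noteq> 0" if "k < ?N" for k
  proof
    assume "matpow G k = 0"
    have "(mat 1 :: 'b^2^2) $ 1 $ 1 = (matpow G k ** matpow G (?N - k)) $ 1 $ 1"
      using matpow_inverse(1)[OF has_mat_order_matpow_eq_1[OF ord], of k] that by simp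
    also have "\<dots> = 0"
      using \<open>matpow G k = 0\<close> by (simp add: matrix_matrix_mult_def)
    finally show False by (simp add: mat_def)
  qed
  then show sub: "matpow G ` {..<?N} \<subseteq> alg_of G - {0}"
    using matpow_in_alg_of by auto
  have "card (alg_of G - {0}) \<le> ?N"
    using card_alg_of_le[of G] alg_of_0[of G] finite_alg_of[of G] by (simp add: card_Diff_singleton)
  also have "\<dots> = card (matpow G ` {..<?N})"
    using card_image[OF has_mat_order_inj_on[OF ord]] by simp
  finally show "card (matpow G ` {..<?N}) = card (alg_of G - {0})"
    using card_mono[OF _ sub] finite_alg_of by (simp add: le_antisym)
qed (simp add: finite_alg_of)

text \<open>The powers of \<open>G\<close> fill \<open>F[G] - {0}\<close>, so \<open>F[G]\<close> has \<open>q\<^sup>2\<close> elements and, every nonzero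
  element being invertible, \<open>M \<mapsto> M u\<close> maps it bijectively onto \<open>F\<^sup>2\<close>.\<close>

lemma matpow_transitive_on_nonzero:
  fixes G :: "'b::{finite,field}^2^2"
  assumes ord: "has_mat_order G (CARD('b) * CARD('b) - 1)" and "u \<noteq> 0" "w \<noteq> 0"
  shows "\<exists>k<CARD('b) * CARD('b) - 1. matpow G k *v u = w"
proof -
  let ?N = "CARD('b) * CARD('b) - 1"
  note powers = powers_eq_nonzero_alg_of[OF ord]
  note inverse = matpow_inverse[OF has_mat_order_matpow_eq_1[OF ord]]
  have "card (alg_of G - {0}) = ?N"
    using powers card_image[OF has_mat_order_inj_on[OF ord]] by simp
  moreover have "1 \<le> card (alg_of G)" "4 \<le> CARD('b) * CARD('b)"
    using alg_of_0[of G] finite_alg_of[of G] mult_le_mono[OF two_le_card_field two_le_card_field]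
    by (auto simp: Suc_le_eq card_gt_0_iff)
  ultimately have card_alg: "card (alg_of G) = CARD('b) * CARD('b)"
    using alg_of_0[of G] by (simp add: card_Diff_singleton)
  have "inj_on (\<lambda>M. M *v u) (alg_of G)"
  proof (rule inj_onI, rule ccontr)
    fix M M' assume "M \<in> alg_of G" "M' \<in> alg_of G" "M *v u = M' *v u" "M \<noteq> M'"
    then have "M - M' \<in> matpow G ` {..<?N}"
      using alg_of_diff powers by auto
    then obtain k where k: "k < ?N" "M - M' = matpow G k"
      by auto
    have "matpow G k *v u = 0"
      using k(2)[symmetric] \<open>M *v u = M' *v u\<close> by (simp add: matrix_vector_mult_diff_rdistrib)
    then have "matpow G (?N - k) *v (matpow G k *v u) = 0"
      by simp
    then have "u = 0"
      using inverse(2)[of k] k by (simp add: matrix_vector_mul_assoc)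
    then show False using \<open>u \<noteq> 0\<close> by simp
  qed
  then have "(\<lambda>M. M *v u) ` alg_of G = UNIV"
    by (intro card_subset_eq) (simp_all add: card_image card_alg power2_eq_square)
  then obtain M where M: "M \<in> alg_of G" "M *v u = w"
    by (metis UNIV_I imageE)
  then have "M \<in> matpow G ` {..<?N}"
    using powers \<open>w \<noteq> 0\<close> by auto
  then show ?thesis using M by auto
qed

section \<open>Index of additive subgroups\<close>

definition coset :: "'c::ab_group_add set \<Rightarrow> 'c \<Rightarrow> 'c set" where
  "coset H a = (\<lambda>y. a + y) ` H"

definition add_subgroup :: "'c::ab_group_add set \<Rightarrow> bool" where
  "add_subgroup H \<longleftrightarrow> 0 \<in> H \<and> (\<forall>x\<in>H. \<forall>y\<in>H. x + y \<in> H \<and> x - y \<in> H)"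

lemma lattice_index_coset: "lattice_index U H = card (coset H ` U)"
  unfolding lattice_index_def coset_def ..

lemma coset_eq_iff:
  assumes "add_subgroup H"
  shows "coset H a = coset H b \<longleftrightarrow> a - b \<in> H"
proof
  assume e: "coset H a = coset H b"
  have "a \<in> coset H a" using assms unfolding add_subgroup_def coset_def by force
  then obtain y where "y \<in> H" "a = b + y" using e unfolding coset_def by auto
  then show "a - b \<in> H" by simp
next
  assume d: "a - b \<in> H"
  have "a + y \<in> coset H b" if "y \<in> H" for y
  proof -
    have "(a - b) + y \<in> H" using assms d that unfolding add_subgroup_def by blast
    then show ?thesis unfolding coset_def by (rule rev_image_eqI) simp
  qed
  moreover have "b + y \<in> coset H a" if "y \<in> H" for y
  proof -
    have "y - (a - b) \<in> H" using assms d that unfolding add_subgroup_def by blast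
    then show ?thesis unfolding coset_def by (rule rev_image_eqI) simp
  qed
  ultimately show "coset H a = coset H b" unfolding coset_def by blast
qed

text \<open>Cosets of \<open>H\<^sub>1\<close> map onto cosets of \<open>H\<^sub>2 \<supseteq> H\<^sub>1\<close>; the map is not injective unless
  \<open>H\<^sub>1 = H\<^sub>2\<close>.\<close>

lemma lattice_index_strict_mono:
  assumes H1: "add_subgroup H1" and H2: "add_subgroup H2" and sub: "H1 \<subset> H2" "H2 \<subseteq> U"
    and fin: "finite (coset H1 ` U)"
  shows "lattice_index U H2 < lattice_index U H1"
proof -
  define \<theta> where "\<theta> C = coset H2 (SOME a. a \<in> C)" for C
  have \<theta>: "\<theta> (coset H1 a) = coset H2 a" for a
  proof -
    have "a \<in> coset H1 a" using H1 unfolding add_subgroup_def coset_def by force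
    then have "(SOME b. b \<in> coset H1 a) \<in> coset H1 a" by (rule someI)
    then have "(SOME b. b \<in> coset H1 a) - a \<in> H2" using sub unfolding coset_def by auto
    then show ?thesis unfolding \<theta>_def using coset_eq_iff[OF H2] by blast
  qed
  have img: "coset H2 ` U = \<theta> ` (coset H1 ` U)"
    by (simp add: image_image \<theta>)
  obtain y where y: "y \<in> H2" "y \<notin> H1" using sub by blast
  have "0 \<in> H2" using H2 unfolding add_subgroup_def by auto
  have "\<not> inj_on \<theta> (coset H1 ` U)"
  proof
    assume i: "inj_on \<theta> (coset H1 ` U)"
    have "\<theta> (coset H1 y) = \<theta> (coset H1 0)"
      unfolding \<theta> using coset_eq_iff[OF H2] y \<open>0 \<in> H2\<close> by simp
    moreover have "y \<in> U" "0 \<in> U" using y \<open>0 \<in> H2\<close> sub by auto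
    ultimately have "coset H1 y = coset H1 0"
      using inj_onD[OF i] by blast
    then show False using coset_eq_iff[OF H1] y by simp
  qed
  then have "card (\<theta> ` (coset H1 ` U)) < card (coset H1 ` U)"
    using card_image_le[OF fin, of \<theta>] inj_on_iff_eq_card[OF fin, of \<theta>] by linarith
  then show ?thesis unfolding lattice_index_coset img .
qed

lemma lattice_index_image:
  fixes f :: "'a::field vec2 \<Rightarrow> 'a vec2"
  assumes add: "\<And>x y. f (x + y) = f x + f y" and inj: "inj f"
  shows "lattice_index (f ` U) (f ` H) = lattice_index U H"
proof -
  have "coset (f ` H) (f a) = f ` coset H a" for a
    unfolding coset_def image_image add ..
  then have "coset (f ` H) ` (f ` U) = (\<lambda>C. f ` C) ` (coset H ` U)"
    by (simp add: image_image)
  moreover have "inj_on (\<lambda>C. f ` C) (coset H ` U)"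
    by (rule inj_onI) (simp add: inj_image_eq_iff[OF inj])
  ultimately show ?thesis unfolding lattice_index_coset by (simp add: card_image)
qed

lemma add_subgroup_std_lattice: "add_subgroup std_lattice"
  by (simp add: add_subgroup_def)

lemma add_subgroup_linear_image:
  fixes A :: "'b::ring_1^'n^'m"
  assumes "add_subgroup H"
  shows "add_subgroup ((\<lambda>y. A *v y) ` H)"
  unfolding add_subgroup_def
proof (intro conjI ballI)
  show "0 \<in> (\<lambda>y. A *v y) ` H"
    using assms by (intro rev_image_eqI[of 0]) (simp_all add: add_subgroup_def)
  fix u v assume "u \<in> (\<lambda>y. A *v y) ` H" "v \<in> (\<lambda>y. A *v y) ` H"
  then obtain a b where ab: "a \<in> H" "b \<in> H" "u = A *v a" "v = A *v b"
    by blast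
  show "u + v \<in> (\<lambda>y. A *v y) ` H"
    using assms ab by (intro rev_image_eqI[of "a + b"])
      (simp_all add: add_subgroup_def matrix_vector_right_distrib)
  show "u - v \<in> (\<lambda>y. A *v y) ` H"
    using assms ab by (intro rev_image_eqI[of "a - b"])
      (simp_all add: add_subgroup_def matrix_vector_mult_diff_distrib)
qed

section \<open>Sublattices of index \<open>q\<close>\<close>

definition line_lattice :: "'a::field^2 \<Rightarrow> 'a vec2 set" where
  "line_lattice x = {y \<in> std_lattice. \<exists>t. red_vec y = t *s x}"

lemma add_subgroup_line_lattice: "add_subgroup (line_lattice x)"
  unfolding add_subgroup_def
proof (intro conjI ballI)
  show "0 \<in> line_lattice x" unfolding line_lattice_def by (auto intro: exI[of _ 0])
  fix u v assume "u \<in> line_lattice x" "v \<in> line_lattice x"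
  then obtain a b where ab: "u \<in> std_lattice" "v \<in> std_lattice" "red_vec u = a *s x" "red_vec v = b *s x"
    unfolding line_lattice_def by auto
  show "u + v \<in> line_lattice x" unfolding line_lattice_def
    using ab by (auto intro!: exI[of _ "a + b"] simp: vector_sadd_rdistrib)
  show "u - v \<in> line_lattice x" unfolding line_lattice_def
    using ab by (auto intro!: exI[of _ "a - b"] simp: vector_sub_rdistrib)
qed

lemma line_lattice_subset_std_lattice: "line_lattice x \<subseteq> std_lattice"
  by (auto simp: line_lattice_def)

lemma image_line_lattice_subset:
  fixes A :: "'a::field mat2"
  assumes "integral_mat A" "red_mat A *v x1 = x2"
  shows "(\<lambda>y. A *v y) ` line_lattice x1 \<subseteq> line_lattice x2"
proof
  fix z assume "z \<in> (\<lambda>y. A *v y) ` line_lattice x1"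
  then obtain y t where y: "y \<in> std_lattice" "red_vec y = t *s x1" "z = A *v y"
    unfolding line_lattice_def by auto
  have "z \<in> std_lattice"
    using y assms(1) integral_mat_iff_maps_std_lattice by blast
  moreover have "red_vec z = t *s x2"
    using y red_vec_mult[OF assms(1) y(1)] assms(2) by (simp add: matrix_vector_mult_smult)
  ultimately show "z \<in> line_lattice x2" unfolding line_lattice_def by auto
qed

definition lift_vec :: "'a::field^2 \<Rightarrow> 'a vec2" where
  "lift_vec u = (\<chi> i. fls_const (u$i))"

lemma lift_vec_std_lattice [simp]: "lift_vec u \<in> std_lattice"
  by (simp add: lift_vec_def std_lattice_def)

lemma red_vec_lift_vec [simp]: "red_vec (lift_vec u) = u"
  by (simp add: lift_vec_def red_vec_def vec_eq_iff)

lemma complement_line: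
  fixes x :: "'a::field^2"
  assumes "x \<noteq> 0"
  obtains z where "\<And>u. \<exists>a t. u = a *s x + t *s z" "\<And>a t. t *s z = a *s x \<Longrightarrow> t = 0"
proof (cases "x$1 = 0")
  case False
  let ?z = "(\<chi> i. if i = 1 then 0 else 1) :: 'a^2"
  show ?thesis
  proof (rule that[of ?z])
    fix u :: "'a^2"
    show "\<exists>a t. u = a *s x + t *s ?z"
      by (rule exI[of _ "u$1 / x$1"], rule exI[of _ "u$2 - u$1 * x$2 / x$1"])
         (use False in \<open>simp add: vec_eq_iff forall_2\<close>)
  next
    fix a t assume "t *s ?z = a *s x"
    then have "a * x$1 = 0" "t = a * x$2" by (simp_all add: vec_eq_iff forall_2)
    then show "t = 0" using False by simp
  qed
next
  case True
  then have x2: "x$2 \<noteq> 0" using assms by (simp add: vec_eq_iff forall_2)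
  let ?z = "(\<chi> i. if i = 1 then 1 else 0) :: 'a^2"
  show ?thesis
  proof (rule that[of ?z])
    fix u :: "'a^2"
    show "\<exists>a t. u = a *s x + t *s ?z"
      by (rule exI[of _ "u$2 / x$2"], rule exI[of _ "u$1"])
         (use True x2 in \<open>simp add: vec_eq_iff forall_2\<close>)
  next
    fix a t assume "t *s ?z = a *s x"
    then have "t = a * x$1" "a * x$2 = 0" by (simp_all add: vec_eq_iff forall_2)
    then show "t = 0" using True x2 by simp
  qed
qed

text \<open>The cosets of \<open>line_lattice x\<close> in \<open>O\<^sup>2\<close> are indexed by the quotient \<open>F\<^sub>q\<^sup>2 / F\<^sub>q x \<cong> F\<^sub>q\<close>.\<close>

lemma lattice_index_line_lattice:
  fixes x :: "'a::{finite,field}^2"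
  assumes "x \<noteq> 0"
  shows "lattice_index std_lattice (line_lattice x) = CARD('a)"
proof -
  obtain z where z1: "\<And>u. \<exists>a t. u = a *s x + t *s z"
    and z2: "\<And>a t. t *s z = a *s x \<Longrightarrow> t = 0" using complement_line[OF assms] by blast
  define F where "F t = coset (line_lattice x) (lift_vec (t *s z))" for t :: 'a
  have "coset (line_lattice x) ` std_lattice = range F"
  proof (intro equalityI subsetI)
    fix C assume "C \<in> coset (line_lattice x) ` std_lattice"
    then obtain y where y: "y \<in> std_lattice" "C = coset (line_lattice x) y" by auto
    obtain a t where "red_vec y = a *s x + t *s z" using z1 by blast
    then have "y - lift_vec (t *s z) \<in> line_lattice x" using y unfolding line_lattice_def by auto
    then have "C = F t" unfolding F_def y(2) using coset_eq_iff[OF add_subgroup_line_lattice] by blast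
    then show "C \<in> range F" by simp
  next
    fix C assume "C \<in> range F"
    then show "C \<in> coset (line_lattice x) ` std_lattice" unfolding F_def by auto
  qed
  moreover have "inj F"
  proof (rule injI)
    fix t t' assume "F t = F t'"
    then have "lift_vec (t *s z) - lift_vec (t' *s z) \<in> line_lattice x"
      unfolding F_def using coset_eq_iff[OF add_subgroup_line_lattice] by blast
    then obtain a where "t *s z - t' *s z = a *s x" unfolding line_lattice_def by auto
    then have "(t - t') *s z = a *s x" by (simp add: vector_sub_rdistrib)
    then show "t = t'" using z2 by fastforce
  qed
  ultimately show ?thesis unfolding lattice_index_coset by (simp add: card_image)
qed

lemma lattice_index_self: "lattice_index std_lattice (std_lattice :: 'a::field vec2 set) = 1"
proof -
  have "coset std_lattice a = coset std_lattice 0" if "a \<in> (std_lattice :: 'a vec2 set)" for a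
    using coset_eq_iff[OF add_subgroup_std_lattice, of a 0] that by simp
  then have "coset std_lattice ` std_lattice = {coset std_lattice (0 :: 'a vec2)}"
    using std_lattice_0 by blast
  then show ?thesis unfolding lattice_index_coset by simp
qed

lemma parallel_if_det_zero:
  fixes u w :: "'a::field^2"
  assumes "u$1 * w$2 = u$2 * w$1"
  shows "\<exists>x a b. x \<noteq> 0 \<and> u = a *s x \<and> w = b *s x"
proof (cases "u = 0")
  case False
  show ?thesis
  proof (cases "u$1 = 0")
    case True
    then have "u$2 \<noteq> 0" "w$1 = 0" using False assms by (auto simp: vec_eq_iff forall_2)
    then have "w = (w$2 / u$2) *s u" using True by (simp add: vec_eq_iff forall_2)
    then show ?thesis using False by (intro exI[of _ u] exI[of _ 1] exI[of _ "w$2 / u$2"]) auto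
  next
    case u1: False
    then have "w = (w$1 / u$1) *s u" using assms by (simp add: vec_eq_iff forall_2 field_simps)
    then show ?thesis using False by (intro exI[of _ u] exI[of _ 1] exI[of _ "w$1 / u$1"]) auto
  qed
next
  case u: True
  let ?e = "(\<chi> i. if i = 1 then 1 else 0) :: 'a^2"
  show ?thesis
  proof (cases "w = 0")
    case False
    then show ?thesis using u by (intro exI[of _ w] exI[of _ 0] exI[of _ 1]) auto
  next
    case True
    have "?e \<noteq> 0" by (simp add: vec_eq_iff)
    then show ?thesis using u True by (intro exI[of _ ?e] exI[of _ 0]) auto
  qed
qed

lemma image_subset_line_if_det_zero:
  fixes R :: "'a::field^2^2"
  assumes "det R = 0"
  shows "\<exists>x. x \<noteq> 0 \<and> (\<forall>z. \<exists>t. R *v z = t *s x)"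
proof -
  have "R$1$1 * R$2$2 = R$2$1 * R$1$2" using assms by (simp add: det_2 mult.commute)
  then obtain x a b where x: "x \<noteq> 0" "(\<chi> i. R$i$1) = a *s x" "(\<chi> i. R$i$2) = b *s x"
    using parallel_if_det_zero[of "\<chi> i. R$i$1" "\<chi> i. R$i$2"] by auto
  have "R *v z = (z$1 * a + z$2 * b) *s x" for z
    using x(2,3) by (simp add: vec_eq_iff forall_2 matrix_vector_mult_def sum_2 algebra_simps)
  then show ?thesis using x(1) by blast
qed

lemma image_std_lattice_eq_if_red_invertible:
  fixes g :: "'a::field mat2"
  assumes ig: "integral_mat g" and "det (red_mat g) \<noteq> 0"
  shows "(\<lambda>y. g *v y) ` std_lattice = std_lattice"
proof
  show "(\<lambda>y. g *v y) ` std_lattice \<subseteq> std_lattice"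
    using ig integral_mat_iff_maps_std_lattice by blast
  have d: "fls_nth (det g) 0 \<noteq> 0" using assms(2) red_mat_det[OF ig] by simp
  then have "det g \<noteq> 0" by auto
  define gi where "gi = mat (inverse (det g)) ** adj2 g"
  have "inverse (det g) \<in> O_ring"
    using O_ring_inverse integral_mat_det[OF ig] d by blast
  then have "integral_mat gi"
    using ig by (simp add: integral_mat_def gi_def mat_mult_entry adj2_def)
  moreover have "g ** gi = mat 1"
    unfolding gi_def using right_inverse_adj2 \<open>det g \<noteq> 0\<close> .
  ultimately show "std_lattice \<subseteq> (\<lambda>y. g *v y) ` std_lattice"
    using integral_mat_iff_maps_std_lattice
    by (auto intro!: rev_image_eqI[of "gi *v _"] simp: matrix_vector_mul_assoc)
qed

lemma image_std_lattice_subset_line_lattice: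
  fixes g :: "'a::field mat2"
  assumes ig: "integral_mat g" and "det (red_mat g) = 0"
  obtains x where "x \<noteq> 0" "(\<lambda>y. g *v y) ` std_lattice \<subseteq> line_lattice x"
proof -
  obtain x where x: "x \<noteq> 0" "\<And>z. \<exists>t. red_mat g *v z = t *s x"
    using image_subset_line_if_det_zero[OF assms(2)] by blast
  have "g *v z \<in> line_lattice x" if "z \<in> std_lattice" for z
  proof -
    obtain t where "red_mat g *v red_vec z = t *s x" using x(2) by blast
    then show ?thesis
      using that ig red_vec_mult[OF ig that] integral_mat_iff_maps_std_lattice
      by (auto simp: line_lattice_def)
  qed
  then show ?thesis using that x(1) by blast
qed

lemma sublattice_of_index_card_eq_line_lattice:
  fixes g :: "'a::{finite,field} mat2"
  assumes sub: "(\<lambda>y. g *v y) ` std_lattice \<subseteq> std_lattice"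
    and index: "lattice_index std_lattice ((\<lambda>y. g *v y) ` std_lattice) = CARD('a)"
  shows "\<exists>x. x \<noteq> 0 \<and> (\<lambda>y. g *v y) ` std_lattice = line_lattice x"
proof -
  let ?M = "(\<lambda>y. g *v y) ` std_lattice"
  have ig: "integral_mat g"
    using sub integral_mat_iff_maps_std_lattice by blast
  have "det (red_mat g) = 0"
  proof (rule ccontr)
    assume "det (red_mat g) \<noteq> 0"
    then have "?M = std_lattice"
      by (rule image_std_lattice_eq_if_red_invertible[OF ig])
    then show False
      using index lattice_index_self[where 'a='a] two_le_card_field[where 'b='a] by simp
  qed
  then obtain x where x: "x \<noteq> 0" "?M \<subseteq> line_lattice x"
    using image_std_lattice_subset_line_lattice[OF ig] by blast
  have fin: "finite (coset ?M ` std_lattice)"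
  proof (rule ccontr)
    assume "infinite (coset ?M ` std_lattice)"
    then have "lattice_index std_lattice ?M = 0"
      unfolding lattice_index_coset by simp
    then show False using index two_le_card_field[where 'b='a] by simp
  qed
  have "?M = line_lattice x"
  proof (rule ccontr)
    assume "?M \<noteq> line_lattice x"
    then have "?M \<subset> line_lattice x" using x(2) by blast
    then have "lattice_index std_lattice (line_lattice x) < lattice_index std_lattice ?M"
      by (rule lattice_index_strict_mono[OF add_subgroup_linear_image[OF add_subgroup_std_lattice]
          add_subgroup_line_lattice _ line_lattice_subset_std_lattice fin])
    then show False
      using lattice_index_line_lattice[OF x(1)] index by simp
  qed
  then show ?thesis using x(1) by blast
qed

section \<open>Vertices and edges of the tree\<close>

lemma scale_set_image: "scale_set c ((\<lambda>y. A *v y) ` U) = (\<lambda>y. (mat c ** A) *v y) ` U"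
  unfolding scale_set_def image_image by (simp add: scalar_mat_mult_vector)

lemma image_scale_set: "(\<lambda>y. A *v y) ` scale_set c L = scale_set c ((\<lambda>y. A *v y) ` L)"
  unfolding scale_set_def image_image by (simp add: matrix_vector_mult_smult)

lemma scale_set_scale_set: "scale_set a (scale_set b L) = scale_set (a * b) L"
  unfolding scale_set_def image_image by (simp add: vector_smult_assoc)

lemma homothety_class_scale_set:
  assumes "s \<noteq> 0"
  shows "homothety_class (scale_set s L) = homothety_class L"
proof (intro equalityI subsetI)
  fix L' assume "L' \<in> homothety_class (scale_set s L)"
  then obtain c where "c \<noteq> 0" "L' = scale_set (c * s) L"
    unfolding homothety_class_def scale_set_scale_set by blast
  then show "L' \<in> homothety_class L"
    unfolding homothety_class_def using assms by auto
next
  fix L' assume "L' \<in> homothety_class L"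
  then obtain c where c: "c \<noteq> 0" "L' = scale_set c L"
    unfolding homothety_class_def by blast
  then have "L' = scale_set (c / s) (scale_set s L)"
    unfolding scale_set_scale_set using assms by simp
  then show "L' \<in> homothety_class (scale_set s L)"
    unfolding homothety_class_def using c(1) assms by auto
qed

lemma mem_homothety_class: "L \<in> homothety_class L"
  unfolding homothety_class_def by (rule CollectI, rule exI[of _ 1]) (simp add: scale_set_def)

lemma homothety_class_eq_if_mem:
  "L' \<in> homothety_class L \<Longrightarrow> homothety_class L' = homothety_class L"
  using homothety_class_scale_set unfolding homothety_class_def by blast

lemma act_vertex_homothety_class:
  "act_vertex A (homothety_class L) = homothety_class ((\<lambda>y. A *v y) ` L)"
  unfolding act_vertex_def homothety_class_def using image_scale_set by blast

lemma act_vertex_mult: "act_vertex (A ** B) V = act_vertex A (act_vertex B V)"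
  unfolding act_vertex_def image_image
  by (rule image_cong[OF refl]) (simp add: image_image matrix_vector_mul_assoc)

lemma O_lattice_iff_std_lattice:
  "O_lattice L \<longleftrightarrow> (\<exists>h. invertible h \<and> L = (\<lambda>y. h *v y) ` std_lattice)"
proof -
  have "{h *v x | x. \<forall>i. x $ i \<in> O_ring} = (\<lambda>y. h *v y) ` std_lattice" for h :: "'a mat2"
    unfolding std_lattice_def by blast
  then show ?thesis unfolding O_lattice_def by auto
qed

lemma BT_vertexE:
  assumes "BT_vertex v"
  obtains h where "invertible h" "v = homothety_class ((\<lambda>y. h *v y) ` std_lattice)"
  using assms unfolding BT_vertex_def O_lattice_iff_std_lattice by blast

lemma invertible_scaled:
  fixes h :: "'a::field mat2"
  assumes "invertible h" "c \<noteq> 0"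
  shows "invertible (mat c ** h)"
  using assms by (simp add: invertible_det_nz det_mul) (simp add: det_2 mat_def)

text \<open>Transporting by \<open>H\<^sup>-\<^sup>1\<close> reduces to sublattices of \<open>O\<^sup>2\<close>.\<close>

lemma sublattice_of_index_card:
  fixes H H' :: "'a::{finite,field} mat2"
  assumes "invertible H"
    and sub: "(\<lambda>y. H' *v y) ` std_lattice \<subseteq> (\<lambda>y. H *v y) ` std_lattice"
    and index: "lattice_index ((\<lambda>y. H *v y) ` std_lattice) ((\<lambda>y. H' *v y) ` std_lattice) = CARD('a)"
  shows "\<exists>x. x \<noteq> 0 \<and> (\<lambda>y. H' *v y) ` std_lattice = (\<lambda>y. H *v y) ` line_lattice x"
proof -
  obtain Hi where Hi: "H ** Hi = mat 1" "Hi ** H = mat 1"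
    using assms(1) unfolding invertible_def by blast
  let ?M = "(\<lambda>y. (Hi ** H') *v y) ` std_lattice"
  have H_M: "(\<lambda>y. H *v y) ` ?M = (\<lambda>y. H' *v y) ` std_lattice"
    unfolding image_image matrix_vector_mul_assoc matrix_mul_assoc Hi(1) by simp
  have "?M \<subseteq> std_lattice"
  proof
    fix u assume "u \<in> ?M"
    then obtain y where "y \<in> std_lattice" "u = Hi *v (H' *v y)"
      by (auto simp: matrix_vector_mul_assoc)
    moreover obtain z where "z \<in> std_lattice" "H' *v y = H *v z"
      using sub \<open>y \<in> std_lattice\<close> by blast
    ultimately show "u \<in> std_lattice"
      by (simp add: matrix_vector_mul_assoc Hi(2))
  qed
  moreover have "lattice_index std_lattice ?M = CARD('a)"
    using index lattice_index_image[of "\<lambda>y. H *v y" std_lattice ?M] H_M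
    by (simp add: matrix_vector_right_distrib inj_matrix_vector_mult[OF assms(1)])
  ultimately obtain x where "x \<noteq> 0" "?M = line_lattice x"
    using sublattice_of_index_card_eq_line_lattice[of "Hi ** H'"] by blast
  then show ?thesis using H_M by blast
qed

lemma BT_edge_from_std_vertex:
  fixes h :: "'a::{finite,field} mat2"
  assumes h: "invertible h" and e: "BT_edge (homothety_class ((\<lambda>y. h *v y) ` std_lattice)) w"
  shows "\<exists>x. x \<noteq> 0 \<and> w = homothety_class ((\<lambda>y. h *v y) ` line_lattice x)"
proof -
  obtain L L' where L: "L \<in> homothety_class ((\<lambda>y. h *v y) ` std_lattice)" and L': "L' \<in> w"
    and sub: "L' \<subseteq> L" and index: "lattice_index L L' = CARD('a)" and "BT_vertex w"
    using e unfolding BT_edge_def by blast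
  obtain c where c: "c \<noteq> 0" "L = (\<lambda>y. (mat c ** h) *v y) ` std_lattice"
    using L unfolding homothety_class_def scale_set_image by blast
  obtain h' where h': "w = homothety_class ((\<lambda>y. h' *v y) ` std_lattice)"
    using \<open>BT_vertex w\<close> by (rule BT_vertexE)
  obtain s where L'_eq: "L' = (\<lambda>y. (mat s ** h') *v y) ` std_lattice"
    using L' unfolding h' homothety_class_def scale_set_image by blast
  have "(\<lambda>y. (mat s ** h') *v y) ` std_lattice \<subseteq> (\<lambda>y. (mat c ** h) *v y) ` std_lattice"
    using sub unfolding c(2) L'_eq .
  moreover have "lattice_index ((\<lambda>y. (mat c ** h) *v y) ` std_lattice)
      ((\<lambda>y. (mat s ** h') *v y) ` std_lattice) = CARD('a)"
    using index unfolding c(2) L'_eq .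
  ultimately obtain x where x: "x \<noteq> 0" "L' = (\<lambda>y. (mat c ** h) *v y) ` line_lattice x"
    using sublattice_of_index_card[OF invertible_scaled[OF h c(1)]] unfolding L'_eq by blast
  have "w = homothety_class L'"
    unfolding h' by (rule homothety_class_eq_if_mem[symmetric]) (use L' h' in simp)
  also have "\<dots> = homothety_class ((\<lambda>y. h *v y) ` line_lattice x)"
    unfolding x(2) scale_set_image[symmetric] homothety_class_scale_set[OF c(1)] ..
  finally show ?thesis using x(1) by blast
qed

section \<open>The stabiliser of a vertex\<close>

lemma stabilizer_mat_1:
  assumes "A_order D \<Lambda>"
  shows "mat 1 \<in> stabilizer (units_of_order \<Lambda>) v"
  using assms unfolding A_order_def stabilizer_def units_of_order_def act_vertex_def
  by (auto intro!: bexI[of _ "mat 1"])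

lemma stabilizer_mult:
  assumes "A_order D \<Lambda>"
    and "g \<in> stabilizer (units_of_order \<Lambda>) v" "h \<in> stabilizer (units_of_order \<Lambda>) v"
  shows "g ** h \<in> stabilizer (units_of_order \<Lambda>) v"
proof -
  have closed: "x ** y \<in> \<Lambda>" if "x \<in> \<Lambda>" "y \<in> \<Lambda>" for x y
    using assms(1) that unfolding A_order_def by blast
  obtain g' where g': "g \<in> \<Lambda>" "g' \<in> \<Lambda>" "g ** g' = mat 1" "g' ** g = mat 1" "act_vertex g v = v"
    using assms(2) unfolding stabilizer_def units_of_order_def by blast
  obtain h' where h': "h \<in> \<Lambda>" "h' \<in> \<Lambda>" "h ** h' = mat 1" "h' ** h = mat 1" "act_vertex h v = v"
    using assms(3) unfolding stabilizer_def units_of_order_def by blast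
  have "(g ** h) ** (h' ** g') = g ** (h ** h') ** g'" "(h' ** g') ** (g ** h) = h' ** (g' ** g) ** h"
    by (simp_all add: matrix_mul_assoc)
  then have "(g ** h) ** (h' ** g') = mat 1" "(h' ** g') ** (g ** h) = mat 1"
    using g' h' by simp_all
  moreover have "act_vertex (g ** h) v = v"
    using g'(5) h'(5) by (simp add: act_vertex_mult)
  ultimately show ?thesis
    unfolding stabilizer_def units_of_order_def using closed g' h' by blast
qed

lemma element_of_order_if_iso_units:
  fixes \<phi> :: "'c::semiring_1^'n^'n \<Rightarrow> 'b::{finite,field}"
  assumes one: "mat 1 \<in> S" and mult: "\<And>g h. g \<in> S \<Longrightarrow> h \<in> S \<Longrightarrow> g ** h \<in> S"
    and bij: "bij_betw \<phi> S {x. x \<noteq> 0}" and hom: "\<forall>g\<in>S. \<forall>h\<in>S. \<phi> (g ** h) = \<phi> g * \<phi> h"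
  shows "\<exists>g. (\<forall>n. matpow g n \<in> S) \<and> has_mat_order g (CARD('b) - 1)"
proof -
  obtain a :: 'b where a: "\<And>n. a ^ n = 1 \<longleftrightarrow> (CARD('b) - 1) dvd n"
    using finite_field_element_of_order by blast
  have "a ^ (CARD('b) - 1) = 1"
    using a[of "CARD('b) - 1"] dvd_refl by blast
  moreover have "CARD('b) - 1 \<noteq> 0"
    using two_le_card_field[where 'b='b] by simp
  ultimately have "a \<noteq> 0"
    by (cases "a = 0") (simp_all add: power_0_left)
  then obtain g where g: "g \<in> S" "\<phi> g = a"
    using bij unfolding bij_betw_def by (metis (mono_tags) imageE mem_Collect_eq)
  have pow: "matpow g n \<in> S" for n
    by (induction n) (simp_all add: one matpow_Suc mult g(1))
  have "\<phi> (mat 1) * \<phi> (mat 1) = \<phi> (mat 1)"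
    using hom[rule_format, OF one one] by simp
  moreover have "\<phi> (mat 1) \<noteq> 0"
    using bij_betw_apply[OF bij one] by simp
  ultimately have \<phi>_one: "\<phi> (mat 1) = 1"
    by simp
  have \<phi>_pow: "\<phi> (matpow g n) = a ^ n" for n
    by (induction n) (simp_all add: \<phi>_one matpow_Suc hom g pow)
  have "matpow g n = mat 1 \<longleftrightarrow> \<phi> (matpow g n) = \<phi> (mat 1)" for n
    using inj_onD[OF bij_betw_imp_inj_on[OF bij] _ pow[of n] one] by auto
  then have "has_mat_order g (CARD('b) - 1)"
    unfolding has_mat_order_def \<phi>_pow \<phi>_one a by blast
  then show ?thesis using pow by blast
qed

lemma conj_image_std_lattice_if_stabilizes:
  assumes hi: "hi ** h = mat 1"
    and stab: "act_vertex g (homothety_class ((\<lambda>y. h *v y) ` std_lattice)) =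
      homothety_class ((\<lambda>y. h *v y) ` std_lattice)"
  shows "\<exists>c. (\<lambda>y. (hi ** g ** h) *v y) ` std_lattice = scale_set c std_lattice"
proof -
  have "(\<lambda>y. g *v y) ` (\<lambda>y. h *v y) ` std_lattice \<in> homothety_class ((\<lambda>y. h *v y) ` std_lattice)"
    using stab mem_homothety_class unfolding act_vertex_homothety_class by metis
  then obtain c where "(\<lambda>y. (g ** h) *v y) ` std_lattice = (\<lambda>y. h *v y) ` scale_set c std_lattice"
    unfolding homothety_class_def image_scale_set image_image matrix_vector_mul_assoc by auto
  then have "(\<lambda>y. hi *v y) ` (\<lambda>y. (g ** h) *v y) ` std_lattice =
      (\<lambda>y. hi *v y) ` (\<lambda>y. h *v y) ` scale_set c std_lattice"
    by simp
  then show ?thesis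
    unfolding image_image matrix_vector_mul_assoc hi matrix_mul_assoc by auto
qed

lemma image_std_lattice_matpow:
  assumes "(\<lambda>y. B *v y) ` std_lattice = scale_set c std_lattice"
  shows "(\<lambda>y. matpow B n *v y) ` std_lattice = scale_set (c ^ n) std_lattice"
proof (induction n)
  case 0
  show ?case by (simp add: scale_set_def)
next
  case (Suc n)
  have "(\<lambda>y. matpow B (Suc n) *v y) ` std_lattice = (\<lambda>y. matpow B n *v y) ` (\<lambda>y. B *v y) ` std_lattice"
    by (simp add: matpow_Suc' image_image matrix_vector_mul_assoc)
  also have "\<dots> = scale_set (c ^ Suc n) std_lattice"
    unfolding assms image_scale_set Suc scale_set_scale_set by (simp add: mult.commute)
  finally show ?case .
qed

lemma subdegree_eq_0_if_scale_set_std_lattice: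
  fixes a :: "'a::field fls"
  assumes "scale_set a std_lattice = std_lattice"
  shows "fls_subdegree a = 0"
proof -
  define e :: "'a vec2" where "e = (\<chi> k. if k = 1 then 1 else 0)"
  have e: "e \<in> std_lattice" "e $ 1 = 1"
    by (simp_all add: e_def std_lattice_def)
  then have "a *s e \<in> std_lattice"
    using assms unfolding scale_set_def by blast
  then have "a \<in> O_ring"
    using e(2) by (auto simp: std_lattice_def dest: spec[of _ 1])
  obtain z where z: "z \<in> std_lattice" "e = a *s z"
    using assms e(1) unfolding scale_set_def by blast
  then have "a * z $ 1 = 1" using e(2) by (metis vector_smult_component)
  then have "inverse a \<in> O_ring" "a \<noteq> 0"
    using z(1) inverse_unique[of a "z $ 1"] by (auto simp: std_lattice_def)
  then show ?thesis
    using O_ring_subdegree[OF \<open>a \<in> O_ring\<close>] O_ring_subdegree[OF \<open>inverse a \<in> O_ring\<close>]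
    by simp
qed

lemma integral_conj_if_stabilizes:
  assumes "h ** hi = mat 1" "hi ** h = mat 1"
    and "act_vertex g (homothety_class ((\<lambda>y. h *v y) ` std_lattice)) =
      homothety_class ((\<lambda>y. h *v y) ` std_lattice)"
    and "matpow g N = mat 1" "0 < N"
  shows "integral_mat (hi ** g ** h)"
proof -
  obtain c where c: "(\<lambda>y. (hi ** g ** h) *v y) ` std_lattice = scale_set c std_lattice"
    using conj_image_std_lattice_if_stabilizes[OF assms(2,3)] by blast
  have "scale_set (c ^ N) std_lattice = (\<lambda>y. matpow (hi ** g ** h) N *v y) ` std_lattice"
    using image_std_lattice_matpow[OF c, of N] by simp
  also have "matpow (hi ** g ** h) N = mat 1"
    using assms(2,4) by (simp add: matpow_conj[OF assms(1,2)])
  finally have "scale_set (c ^ N) std_lattice = std_lattice"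
    by simp
  then have "int N * fls_subdegree c = 0"
    using subdegree_eq_0_if_scale_set_std_lattice by (metis fls_subdegree_pow)
  then have "c \<in> O_ring"
    using assms(5) by (simp add: O_ring_def)
  then have "scale_set c std_lattice \<subseteq> std_lattice"
    by (auto simp: scale_set_def std_lattice_def)
  then show ?thesis
    using c integral_mat_iff_maps_std_lattice by blast
qed

section \<open>Transitivity on the edges\<close>

lemma of_nat_card_sq_minus_1:
  "(of_nat (CARD('a) * CARD('a) - 1) :: 'a::{finite,field}) = - 1"
proof -
  have "(of_nat (CARD('a)) :: 'a) = 0"
    using CHAR_dvd_CARD[where 'a='a] of_nat_eq_0_iff_char_dvd by blast
  moreover have "1 \<le> CARD('a) * CARD('a)"
    by (simp add: Suc_leI)
  ultimately show ?thesis by (simp add: of_nat_diff)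
qed

lemma has_mat_order_red_mat:
  fixes g :: "'a::field mat2"
  assumes ig: "integral_mat g" and ord: "has_mat_order g N" and "(of_nat N :: 'a) \<noteq> 0"
  shows "has_mat_order (red_mat g) N"
proof -
  have "matpow g n = mat 1 \<longleftrightarrow> red_mat (matpow g n) = mat 1" for n
  proof
    assume "red_mat (matpow g n) = mat 1"
    moreover have "matpow (matpow g n) N = matpow (matpow g N) n"
      by (simp only: matpow_mult[symmetric] mult.commute)
    then have "matpow (matpow g n) N = mat 1"
      using has_mat_order_matpow_eq_1[OF ord] by simp
    ultimately show "matpow g n = mat 1"
      using integral_mat_eq_1_if_red_mat_eq_1[OF integral_matpow[OF ig] _ assms(3)] by blast
  qed simp
  then show ?thesis
    using ord by (simp add: has_mat_order_def red_matpow[OF ig])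
qed

lemma matpow_transitive_on_line_lattices:
  fixes g :: "'a::{finite,field} mat2"
  assumes ig: "integral_mat g" and ord: "has_mat_order g (CARD('a) * CARD('a) - 1)"
    and "x1 \<noteq> 0" "x2 \<noteq> 0"
  shows "\<exists>k. (\<lambda>y. matpow g k *v y) ` line_lattice x1 = line_lattice x2"
proof -
  let ?N = "CARD('a) * CARD('a) - 1"
  have red_ord: "has_mat_order (red_mat g) ?N"
    using has_mat_order_red_mat[OF ig ord] of_nat_card_sq_minus_1[where 'a='a] by simp
  obtain k where k: "k < ?N" "matpow (red_mat g) k *v x1 = x2"
    using matpow_transitive_on_nonzero[OF red_ord assms(3,4)] by blast
  have k': "matpow (red_mat g) (?N - k) *v x2 = x1"
    unfolding k(2)[symmetric] using k(1) matpow_inverse(2)[OF has_mat_order_matpow_eq_1[OF red_ord], of k]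
    by (simp add: matrix_vector_mul_assoc)
  have to_x1: "(\<lambda>y. matpow g (?N - k) *v y) ` line_lattice x2 \<subseteq> line_lattice x1"
    using image_line_lattice_subset[OF integral_matpow[OF ig], of "?N - k" x2 x1] k'
    by (simp add: red_matpow[OF ig])
  have to_x2: "(\<lambda>y. matpow g k *v y) ` line_lattice x1 \<subseteq> line_lattice x2"
    using image_line_lattice_subset[OF integral_matpow[OF ig], of k x1 x2] k(2)
    by (simp add: red_matpow[OF ig])
  have "line_lattice x2 \<subseteq> (\<lambda>y. matpow g k *v y) ` line_lattice x1"
  proof
    fix z assume z: "z \<in> line_lattice x2"
    have "matpow g k *v (matpow g (?N - k) *v z) = z"
      using matpow_inverse(1)[OF has_mat_order_matpow_eq_1[OF ord], of k] k(1)
      by (simp add: matrix_vector_mul_assoc)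
    moreover have "matpow g (?N - k) *v z \<in> line_lattice x1"
      using to_x1 z by blast
    ultimately show "z \<in> (\<lambda>y. matpow g k *v y) ` line_lattice x1"
      by (metis image_eqI)
  qed
  then show ?thesis using to_x2 by blast
qed

lemma act_vertex_conj:
  assumes "h ** hi = mat 1"
  shows "act_vertex B (homothety_class ((\<lambda>y. h *v y) ` U)) =
    homothety_class ((\<lambda>y. h *v y) ` (\<lambda>y. (hi ** B ** h) *v y) ` U)"
proof -
  have "h ** (hi ** B ** h) = B ** h"
    using assms by (simp add: matrix_mul_assoc)
  then show ?thesis
    unfolding act_vertex_homothety_class image_image matrix_vector_mul_assoc by simp
qed

lemma integral_conj_generator_of_stabilizer:
  fixes \<phi> :: "'a::{finite,field} mat2 \<Rightarrow> 'b::{finite,field}"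
  assumes order: "A_order D \<Lambda>" and "BT_vertex v" and "CARD('b) = CARD('a) ^ 2"
    and "bij_betw \<phi> (stabilizer (units_of_order \<Lambda>) v) {x. x \<noteq> 0}"
    and "\<forall>g\<in>stabilizer (units_of_order \<Lambda>) v. \<forall>h\<in>stabilizer (units_of_order \<Lambda>) v.
           \<phi> (g ** h) = \<phi> g * \<phi> h"
  obtains g h hi where "\<forall>n. matpow g n \<in> stabilizer (units_of_order \<Lambda>) v"
    and "v = homothety_class ((\<lambda>y. h *v y) ` std_lattice)" "h ** hi = mat 1" "hi ** h = mat 1"
    and "integral_mat (hi ** g ** h)" "has_mat_order (hi ** g ** h) (CARD('a) * CARD('a) - 1)"
proof -
  let ?N = "CARD('a) * CARD('a) - 1"
  obtain g where g: "\<forall>n. matpow g n \<in> stabilizer (units_of_order \<Lambda>) v" and ord: "has_mat_order g ?N"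
    using element_of_order_if_iso_units[OF stabilizer_mat_1[OF order] stabilizer_mult[OF order]
        assms(4,5)] assms(3) by (auto simp: power2_eq_square)
  obtain h where h: "invertible h" "v = homothety_class ((\<lambda>y. h *v y) ` std_lattice)"
    using assms(2) by (rule BT_vertexE)
  obtain hi where hi: "h ** hi = mat 1" "hi ** h = mat 1"
    using h(1) unfolding invertible_def by blast
  have "act_vertex g v = v"
    using g[rule_format, of 1] by (simp add: stabilizer_def matpow_Suc)
  moreover have "0 < ?N"
    using mult_le_mono[OF two_le_card_field[where 'b='a] two_le_card_field[where 'b='a]] by simp
  ultimately have "integral_mat (hi ** g ** h)"
    using integral_conj_if_stabilizes[OF hi] has_mat_order_matpow_eq_1[OF ord] h(2) by blast
  moreover have "has_mat_order (hi ** g ** h) ?N"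
    using has_mat_order_conj[OF hi] ord by blast
  ultimately show ?thesis
    by (rule that[OF g h(2) hi])
qed

theorem corollary5p3:
  fixes D \<Lambda> :: "'a::{finite,field} mat2 set"
    and v :: "'a vec2 set set"
    and \<phi> :: "'a mat2 \<Rightarrow> 'b::{finite,field}"
  assumes "quaternion_division_algebra D"
    and "maximal_A_order D \<Lambda>"
    and "BT_vertex v"
    and "CARD('b) = CARD('a) ^ 2"
    and "bij_betw \<phi> (stabilizer (units_of_order \<Lambda>) v) {x. x \<noteq> 0}"
    and "\<forall>g\<in>stabilizer (units_of_order \<Lambda>) v. \<forall>h\<in>stabilizer (units_of_order \<Lambda>) v.
           \<phi> (g ** h) = \<phi> g * \<phi> h"
  shows "\<forall>w w'. BT_edge v w \<and> BT_edge v w' \<longrightarrow>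
           (\<exists>g\<in>stabilizer (units_of_order \<Lambda>) v. act_vertex g w = w')"
proof (intro allI impI)
  fix w w' assume edges: "BT_edge v w \<and> BT_edge v w'"
  \<comment> \<open>Only the ring structure of \<open>\<Lambda>\<close> enters.\<close>
  have "A_order D \<Lambda>"
    using assms(2) by (simp add: maximal_A_order_def)
  obtain g h hi where g: "\<forall>n. matpow g n \<in> stabilizer (units_of_order \<Lambda>) v"
    and v: "v = homothety_class ((\<lambda>y. h *v y) ` std_lattice)" and hi: "h ** hi = mat 1" "hi ** h = mat 1"
    and integral: "integral_mat (hi ** g ** h)"
    and ord: "has_mat_order (hi ** g ** h) (CARD('a) * CARD('a) - 1)"
    using \<open>A_order D \<Lambda>\<close> assms(3-6) by (rule integral_conj_generator_of_stabilizer)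
  have "invertible h"
    using hi unfolding invertible_def by blast
  then obtain x1 x2 where x: "x1 \<noteq> 0" "x2 \<noteq> 0"
    and w: "w = homothety_class ((\<lambda>y. h *v y) ` line_lattice x1)"
    and w': "w' = homothety_class ((\<lambda>y. h *v y) ` line_lattice x2)"
    using edges BT_edge_from_std_vertex unfolding v by blast
  obtain k where k: "(\<lambda>y. matpow (hi ** g ** h) k *v y) ` line_lattice x1 = line_lattice x2"
    using matpow_transitive_on_line_lattices[OF integral ord x] by blast
  have "act_vertex (matpow g k) w = w'"
    unfolding w w' act_vertex_conj[OF hi(1)] matpow_conj[OF hi, symmetric] k ..
  then show "\<exists>g\<in>stabilizer (units_of_order \<Lambda>) v. act_vertex g w = w'"
    using g by blast
qed

end
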